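(* Let $\eta$ be an ordinal with $\eta\in\mathcal{H}_\eta(\emptyset)$, and for any ordinal $\beta$ put $\hat\beta:=\eta+\omega^{\Omega+\beta}$. Then: (i) if $\alpha\in\mathcal{H}_\eta(\emptyset)$ then $\hat\alpha\in\mathcal{H}_{\hat\alpha}(\emptyset)$ and $\psi_\Omega(\hat\alpha)\in\mathcal{H}_{\hat\alpha}(\emptyset)$; (ii) if $\alpha_0\in\mathcal{H}_\eta(\emptyset)$ and $\alpha_0<\alpha$ then $\psi_\Omega(\hat{\alpha_0})<\psi_\Omega(\hat\alpha)$.
   Context: Let $\Omega$ be a big ordinal (e.g. $\aleph_1$), and $\varphi$ the binary Veblen function. By transfinite recursion on $\alpha$ define $B^\Omega(\alpha)$ as the closure of $\{0,\Omega\}$ under $+$, $(\xi,\eta)\mapsto\varphi\xi\eta$, and $\xi\mapsto\psi_\Omega(\xi)$ for $\xi<\alpha$; and $\psi_\Omega(\alpha):=\min\{\rho<\Omega:\rho\notin B^\Omega(\alpha)\}$. Let $\varepsilon_{\Omega+1}$ be the least $\eta>\Omega$ with $\omega^\eta=\eta$; all ordinals considered belong to $B^\Omega(\varepsilon_{\Omega+1})$. For each $\eta$ and each set $X$ of such ordinals, $\mathcal{H}_\eta(X):=\bigcap\{B^\Omega(\alpha): X\subseteq B^\Omega(\alpha)\text{ and }\eta<\alpha\}$. *)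

theory Defs
  imports "HOL-Library.Countable_Set"
begin

text \<open>Ordinals are modelled as the elements of a well-ordered type 'a
(element x represents the order type of its initial segment).
Ordinal arithmetic is defined by transfinite recursion along the order.\<close>

definition olt_rel :: "('a::wellorder \<times> 'a) set" where
  "olt_rel = {(x, y). x < y}"

definition ozero :: "'a::wellorder" where
  "ozero = (LEAST x. True)"

definition osucc :: "'a::wellorder \<Rightarrow> 'a" where
  "osucc x = (LEAST y. x < y)"

definition osup :: "'a::wellorder set \<Rightarrow> 'a" where
  "osup S = (LEAST y. \<forall>s\<in>S. s \<le> y)"

definition oone :: "'a::wellorder" where
  "oone = osucc ozero"

definition oomega :: "'a::wellorder" where
  "oomega = (LEAST x. ozero < x \<and> (\<forall>y<x. osucc y < x))"

definition oplus :: "'a::wellorder \<Rightarrow> 'a \<Rightarrow> 'a" where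
  "oplus a = wfrec olt_rel (\<lambda>f b. osup (insert a (osucc ` f ` {c. c < b})))"

definition omul :: "'a::wellorder \<Rightarrow> 'a \<Rightarrow> 'a" where
  "omul a = wfrec olt_rel (\<lambda>f b. osup ((\<lambda>c. oplus (f c) a) ` {c. c < b}))"

definition oexp :: "'a::wellorder \<Rightarrow> 'a \<Rightarrow> 'a" where
  "oexp a = wfrec olt_rel (\<lambda>f b. osup (insert oone ((\<lambda>c. omul (f c) a) ` {c. c < b})))"

definition oenum :: "('a::wellorder \<Rightarrow> bool) \<Rightarrow> 'a \<Rightarrow> 'a" where
  "oenum P = wfrec olt_rel (\<lambda>f b. LEAST x. P x \<and> (\<forall>c<b. f c < x))"

definition ophi :: "'a::wellorder \<Rightarrow> 'a \<Rightarrow> 'a" where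
  "ophi = wfrec olt_rel (\<lambda>f xi. if xi = ozero then oexp oomega
                                   else oenum (\<lambda>x. \<forall>z<xi. f z x = x))"

inductive_set Bcl :: "'a::wellorder \<Rightarrow> ('a \<Rightarrow> 'a) \<Rightarrow> 'a \<Rightarrow> 'a set"
  for Om :: 'a and g :: "'a \<Rightarrow> 'a" and alpha :: 'a where
  zero: "ozero \<in> Bcl Om g alpha"
| Om: "Om \<in> Bcl Om g alpha"
| plus: "x \<in> Bcl Om g alpha \<Longrightarrow> y \<in> Bcl Om g alpha \<Longrightarrow> oplus x y \<in> Bcl Om g alpha"
| phi: "x \<in> Bcl Om g alpha \<Longrightarrow> y \<in> Bcl Om g alpha \<Longrightarrow> ophi x y \<in> Bcl Om g alpha"
| psi: "xi \<in> Bcl Om g alpha \<Longrightarrow> xi < alpha \<Longrightarrow> g xi \<in> Bcl Om g alpha"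

definition opsi :: "'a::wellorder \<Rightarrow> 'a \<Rightarrow> 'a" where
  "opsi Om = wfrec olt_rel (\<lambda>f alpha. LEAST rho. rho < Om \<and> rho \<notin> Bcl Om f alpha)"

definition BOm :: "'a::wellorder \<Rightarrow> 'a \<Rightarrow> 'a set" where
  "BOm Om alpha = Bcl Om (opsi Om) alpha"

definition eps_succ :: "'a::wellorder \<Rightarrow> 'a" where
  "eps_succ Om = (LEAST e. Om < e \<and> oexp oomega e = e)"

definition HH :: "'a::wellorder \<Rightarrow> 'a \<Rightarrow> 'a set \<Rightarrow> 'a set" where
  "HH Om eta X = \<Inter> {BOm Om alpha | alpha. X \<subseteq> BOm Om alpha \<and> eta < alpha}"

definition is_omega1 :: "'a::wellorder \<Rightarrow> bool" where
  "is_omega1 Om \<longleftrightarrow> uncountable {x. x < Om} \<and> (\<forall>x<Om. countable {y. y < x})"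

definition omega2_universe :: "'a::wellorder \<Rightarrow> bool" where
  "omega2_universe Om \<longleftrightarrow>
     (\<forall>x::'a. \<exists>f. inj_on f {y. y < x} \<and> f ` {y. y < x} \<subseteq> {y. y < Om}) \<and>
     (\<forall>S::'a set. (\<exists>f. inj_on f S \<and> f ` S \<subseteq> {y. y < Om}) \<longrightarrow> (\<exists>b. \<forall>s\<in>S. s < b))"

end

theory Submission imports Defs begin

text \<open>Each H_e(\<emptyset>) contains 0 and \<Omega>, is closed
under + and \<phi> and under \<psi> applied to arguments at most e, and grows with e. Since
eta \<le> hat(alpha), both eta and alpha lie in H_hat(alpha)(\<emptyset>), hence so do hat(alpha) and
\<psi>(hat(alpha)): this is (i). For (ii), hat is strictly increasing, so by (i) \<psi>(hat(alpha0)) lies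
in B(hat(alpha)), whereas \<psi>(hat(alpha)) does not; and \<psi> is weakly increasing because B is.
That \<psi> is well defined rests on every B(beta) being countable while \<Omega> is not; that the
universe has order type \<omega>_2 makes the suprema in the recursive definitions of ordinal
arithmetic exist.\<close>

lemma wf_olt_rel: "wf (olt_rel :: ('a::wellorder \<times> 'a) set)"
  unfolding olt_rel_def by (rule wf)

lemma cut_olt_rel: "c < b \<Longrightarrow> cut f olt_rel b c = f c"
  by (simp add: cut_apply olt_rel_def)

lemma image_cut_olt_rel: "(\<lambda>c. h (cut f olt_rel b c)) ` {c. c < b} = (\<lambda>c. h (f c)) ` {c. c < b}"
  by (rule image_cong) (simp_all add: cut_olt_rel)

lemma oplus_unfold: "oplus a b = osup (insert a (osucc ` oplus a ` {c. c < b}))"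
  unfolding oplus_def by (subst wfrec[OF wf_olt_rel]) (simp add: image_image image_cut_olt_rel)

lemma omul_unfold: "omul a b = osup ((\<lambda>c. oplus (omul a c) a) ` {c. c < b})"
  unfolding omul_def by (subst wfrec[OF wf_olt_rel]) (simp add: image_cut_olt_rel[of "\<lambda>x. oplus x a"])

lemma oexp_unfold: "oexp a b = osup (insert oone ((\<lambda>c. omul (oexp a c) a) ` {c. c < b}))"
  unfolding oexp_def
  by (subst wfrec[OF wf_olt_rel]) (simp add: image_cut_olt_rel[of "\<lambda>x. omul x a"])

lemma ophi_ozero: "ophi ozero = oexp oomega"
  unfolding ophi_def by (subst wfrec[OF wf_olt_rel]) simp

lemma osup_upper: "\<exists>z. \<forall>s\<in>S. s \<le> z \<Longrightarrow> s \<in> S \<Longrightarrow> s \<le> osup S"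
  unfolding osup_def using LeastI_ex[of "\<lambda>y. \<forall>s\<in>S. s \<le> y"] by blast

lemma osucc_greater: "x < b \<Longrightarrow> x < osucc x"
  unfolding osucc_def by (rule LeastI)

lemma osucc_least: "x < y \<Longrightarrow> osucc x \<le> y"
  unfolding osucc_def by (rule Least_le)

lemma ozero_le: "ozero \<le> x"
  unfolding ozero_def by (rule Least_le) simp

lemma strict_mono_wellorder_increasing:
  fixes f :: "'a::wellorder \<Rightarrow> 'a"
  assumes "strict_mono f"
  shows "b \<le> f b"
proof (induction b rule: less_induct)
  case (less b)
  show ?case
  proof (rule ccontr)
    assume "\<not> b \<le> f b"
    hence "f b < b" by simp
    with less.IH have "f b \<le> f (f b)" .
    moreover have "f (f b) < f b" using \<open>f b < b\<close> by (rule strict_monoD[OF assms])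
    ultimately show False by simp
  qed
qed

lemma is_omega1_nonempty: "is_omega1 Om \<Longrightarrow> \<exists>x. x < Om"
proof (rule ccontr)
  assume "is_omega1 Om" and "\<nexists>x. x < Om"
  hence "uncountable {}" unfolding is_omega1_def by simp
  thus False by simp
qed

text \<open>Otherwise {x. x < Om} would be the countable set of elements at most y.\<close>
lemma is_omega1_limit:
  assumes "is_omega1 Om" and "y < Om"
  shows "osucc y < Om"
proof (rule ccontr)
  assume "\<not> osucc y < Om"
  hence "{x. x < Om} \<subseteq> insert y {x. x < y}"
    using osucc_least[of y] by (fastforce simp: not_less_iff_gr_or_eq)
  moreover have "countable (insert y {x. x < y})"
    using assms unfolding is_omega1_def by simp
  ultimately show False
    using assms(1) countable_subset unfolding is_omega1_def by blast
qed

lemma oomega_limit: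
  assumes "is_omega1 (Om::'a::wellorder)"
  shows "ozero < (oomega::'a)" and "y < oomega \<Longrightarrow> osucc y < (oomega::'a)"
proof -
  have "ozero < Om" using is_omega1_nonempty[OF assms] ozero_le le_less_trans by blast
  hence "ozero < Om \<and> (\<forall>y<Om. osucc y < Om)" using is_omega1_limit[OF assms] by blast
  hence "ozero < (oomega::'a) \<and> (\<forall>y<oomega. osucc y < (oomega::'a))"
    unfolding oomega_def by (rule LeastI)
  thus "ozero < (oomega::'a)" and "y < oomega \<Longrightarrow> osucc y < (oomega::'a)" by blast+
qed

lemma omega2_universe_initial_segment_inj:
  fixes Om x :: "'a::wellorder"
  shows "omega2_universe Om \<Longrightarrow> \<exists>f. inj_on f {y. y < x} \<and> f ` {y. y < x} \<subseteq> {y. y < Om}"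
  unfolding omega2_universe_def by (drule conjunct1) (erule spec)

lemma omega2_universe_bounded:
  fixes Om :: "'a::wellorder" and S :: "'a set"
  assumes "omega2_universe Om" and "inj_on f S" and "f ` S \<subseteq> {y. y < Om}"
  shows "\<exists>b. \<forall>s\<in>S. s < b"
proof -
  have "(\<exists>f. inj_on f S \<and> f ` S \<subseteq> {y. y < Om}) \<longrightarrow> (\<exists>b. \<forall>s\<in>S. s < b)"
    using assms(1) unfolding omega2_universe_def by (rule spec[OF conjunct2])
  thus ?thesis using assms(2,3) by blast
qed

lemma omega2_universe_image_bounded:
  fixes Om b :: "'a::wellorder" and g :: "'a \<Rightarrow> 'a"
  assumes "omega2_universe Om"
  shows "\<exists>y. \<forall>c<b. g c < y"
proof -
  obtain f where f: "inj_on f {c. c < b}" "f ` {c. c < b} \<subseteq> {y. y < Om}"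
    using omega2_universe_initial_segment_inj[OF assms] by blast
  let ?h = "f \<circ> inv_into {c. c < b} g"
  have into: "inv_into {c. c < b} g ` g ` {c. c < b} \<subseteq> {c. c < b}"
    by (rule image_subsetI) (rule inv_into_into)
  have "inj_on ?h (g ` {c. c < b})"
    by (rule comp_inj_on[OF inj_on_inv_into[OF subset_refl] inj_on_subset[OF f(1) into]])
  moreover have "?h ` g ` {c. c < b} \<subseteq> {y. y < Om}"
    using image_mono[OF into, of f] f(2) by (simp add: image_comp)
  ultimately obtain y where "\<forall>s\<in>g ` {c. c < b}. s < y"
    using omega2_universe_bounded[OF assms] by blast
  thus ?thesis by blast
qed

context
  fixes Om :: "'a::wellorder"
  assumes omega1: "is_omega1 Om" and omega2: "omega2_universe Om"
begin

lemma osup_insert_image_upper: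
  fixes b :: 'a and g :: "'a \<Rightarrow> 'a"
  shows "a \<le> osup (insert a (g ` {c. c < b}))"
    and "c < b \<Longrightarrow> g c \<le> osup (insert a (g ` {c. c < b}))"
proof -
  obtain y where "\<forall>c<b. g c < y" using omega2_universe_image_bounded[OF omega2, of b g] by blast
  hence "\<exists>z. \<forall>s\<in>insert a (g ` {c. c < b}). s \<le> z"
    by (intro exI[of _ "max a y"]) (auto simp: le_max_iff_disj less_imp_le)
  thus "a \<le> osup (insert a (g ` {c. c < b}))"
    and "c < b \<Longrightarrow> g c \<le> osup (insert a (g ` {c. c < b}))"
    by (auto intro: osup_upper)
qed

lemma osup_image_upper:
  fixes b :: 'a and g :: "'a \<Rightarrow> 'a"
  shows "c < b \<Longrightarrow> g c \<le> osup (g ` {c. c < b})"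
proof -
  obtain y where "\<forall>c<b. g c < y" using omega2_universe_image_bounded[OF omega2, of b g] by blast
  hence "\<exists>z. \<forall>s\<in>g ` {c. c < b}. s \<le> z" by (auto intro: less_imp_le)
  thus "c < b \<Longrightarrow> g c \<le> osup (g ` {c. c < b})" by (auto intro: osup_upper)
qed

lemma less_osucc: "x < osucc (x::'a)"
proof -
  obtain z where z: "z < Om" using is_omega1_nonempty[OF omega1] by (rule exE)
  obtain y where "\<forall>c<Om. x < y"
    using omega2_universe_image_bounded[OF omega2, of Om "\<lambda>_. x"] by (rule exE)
  with z have "x < y" by blast
  thus ?thesis by (rule osucc_greater)
qed

lemma oplus_ge_left: "a \<le> oplus a (b::'a)"
  using osup_insert_image_upper(1)[of a "osucc \<circ> oplus a" b]
  by (simp add: oplus_unfold[of a b] image_comp)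

lemma oplus_strict_mono: "c < b \<Longrightarrow> oplus a c < oplus a (b::'a)"
  using osup_insert_image_upper(2)[of c b "osucc \<circ> oplus a" a] less_osucc[of "oplus a c"]
  by (simp add: oplus_unfold[of a b] image_comp)

lemma oplus_ge_right: "b \<le> oplus a (b::'a)"
  by (rule strict_mono_wellorder_increasing) (simp add: strict_mono_def oplus_strict_mono)

lemma omul_step: "c < b \<Longrightarrow> oplus (omul x c) x \<le> omul x (b::'a)"
  using osup_image_upper[of c b "\<lambda>c. oplus (omul x c) x"] by (simp add: omul_unfold[of x b])

lemma omul_greater:
  assumes "ozero < x" and "oone < a"
  shows "x < omul x (a::'a)"
proof -
  have "x \<le> oplus (omul x ozero) x" by (rule oplus_ge_right)
  also have "\<dots> \<le> omul x oone"
    unfolding oone_def by (rule omul_step, rule less_osucc)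
  also have "\<dots> < oplus (omul x oone) x"
    using oplus_strict_mono[OF assms(1)] oplus_ge_left le_less_trans by blast
  also have "\<dots> \<le> omul x a" by (rule omul_step[OF assms(2)])
  finally show ?thesis .
qed

lemma oexp_strict_mono:
  assumes "oone < a" and "c < b"
  shows "oexp a c < oexp a (b::'a)"
proof -
  have "oone \<le> oexp a c"
    using osup_insert_image_upper(1)[of oone "\<lambda>c. omul (oexp a c) a" c]
    by (simp add: oexp_unfold[of a c])
  hence "ozero < oexp a c"
    using less_osucc[of ozero] unfolding oone_def by simp
  hence "oexp a c < omul (oexp a c) a" using assms(1) by (rule omul_greater)
  also have "\<dots> \<le> oexp a b"
    using osup_insert_image_upper(2)[OF assms(2), of "\<lambda>c. omul (oexp a c) a" oone]
    by (simp add: oexp_unfold[of a b])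
  finally show ?thesis .
qed

lemma oone_less_oomega: "oone < (oomega::'a)"
  unfolding oone_def by (rule oomega_limit[OF omega1])+

end

fun Bcl_stage :: "'a::wellorder \<Rightarrow> ('a \<Rightarrow> 'a) \<Rightarrow> 'a \<Rightarrow> nat \<Rightarrow> 'a set" where
  "Bcl_stage Om g al 0 = {ozero, Om}"
| "Bcl_stage Om g al (Suc n) = Bcl_stage Om g al n
     \<union> case_prod oplus ` (Bcl_stage Om g al n \<times> Bcl_stage Om g al n)
     \<union> case_prod ophi ` (Bcl_stage Om g al n \<times> Bcl_stage Om g al n)
     \<union> g ` (Bcl_stage Om g al n \<inter> {x. x < al})"

lemma Bcl_stage_mono: "m \<le> n \<Longrightarrow> Bcl_stage Om g al m \<subseteq> Bcl_stage Om g al n"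
  by (rule lift_Suc_mono_le[of "Bcl_stage Om g al"]) auto

lemma countable_Bcl_stage: "countable (Bcl_stage Om g al n)"
  by (induction n) auto

lemma Bcl_stage_max:
  "x \<in> Bcl_stage Om g al m \<Longrightarrow> y \<in> Bcl_stage Om g al n
    \<Longrightarrow> x \<in> Bcl_stage Om g al (max m n) \<and> y \<in> Bcl_stage Om g al (max m n)"
  using Bcl_stage_mono[of m "max m n" Om g al] Bcl_stage_mono[of n "max m n" Om g al] by auto

lemma Bcl_subset_stages: "Bcl Om g al \<subseteq> (\<Union>n. Bcl_stage Om g al n)"
proof
  fix x assume "x \<in> Bcl Om g al"
  thus "x \<in> (\<Union>n. Bcl_stage Om g al n)"
  proof (induction rule: Bcl.induct)
    case (plus x y)
    then obtain m n where "x \<in> Bcl_stage Om g al m" "y \<in> Bcl_stage Om g al n" by blast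
    hence "oplus x y \<in> Bcl_stage Om g al (Suc (max m n))" by (auto dest: Bcl_stage_max)
    thus ?case by blast
  next
    case (phi x y)
    then obtain m n where "x \<in> Bcl_stage Om g al m" "y \<in> Bcl_stage Om g al n" by blast
    hence "ophi x y \<in> Bcl_stage Om g al (Suc (max m n))" by (auto dest: Bcl_stage_max)
    thus ?case by blast
  next
    case (psi xi)
    then obtain n where "xi \<in> Bcl_stage Om g al n" by blast
    hence "g xi \<in> Bcl_stage Om g al (Suc n)" using psi by auto
    thus ?case by blast
  qed (metis UN_I UNIV_I insertI1 insertI2 Bcl_stage.simps(1))+
qed

lemma countable_Bcl: "countable (Bcl Om g al)"
  using Bcl_subset_stages by (rule countable_subset) (simp add: countable_Bcl_stage)

lemma Bcl_cong_subset:
  assumes "\<And>xi. xi < al \<Longrightarrow> g xi = g' xi"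
  shows "Bcl Om g al \<subseteq> Bcl Om g' al"
proof
  fix x assume "x \<in> Bcl Om g al"
  thus "x \<in> Bcl Om g' al"
  proof induction
    case (psi xi)
    thus ?case using assms[of xi] Bcl.psi[of xi Om g' al] by simp
  qed (auto intro: Bcl.intros)
qed

lemma Bcl_cong:
  assumes "\<And>xi. xi < al \<Longrightarrow> g xi = g' xi"
  shows "Bcl Om g al = Bcl Om g' al"
  using Bcl_cong_subset[of al g g'] Bcl_cong_subset[of al g' g] assms by (metis equalityI)

lemma opsi_unfold: "opsi Om al = (LEAST rho. rho < Om \<and> rho \<notin> BOm Om al)"
proof -
  have "Bcl Om (cut (opsi Om) olt_rel al) al = BOm Om al"
    unfolding BOm_def by (rule Bcl_cong) (rule cut_olt_rel)
  thus ?thesis by (subst opsi_def, subst wfrec[OF wf_olt_rel]) (simp add: opsi_def)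
qed

lemma BOm_mono: "al \<le> be \<Longrightarrow> BOm Om al \<subseteq> BOm Om be"
proof
  fix x assume le: "al \<le> be" and x: "x \<in> BOm Om al"
  from x have "x \<in> Bcl Om (opsi Om) al" unfolding BOm_def .
  thus "x \<in> BOm Om be"
    unfolding BOm_def by induction (auto intro: Bcl.intros less_le_trans[OF _ le])
qed

text \<open>\<Omega> is uncountable and B(al) is countable, so the LEAST in opsi_unfold is attained.\<close>
lemma opsi_less_notin_BOm:
  assumes "is_omega1 Om"
  shows "opsi Om al < Om" and "opsi Om al \<notin> BOm Om al"
proof -
  have "\<not> {x. x < Om} \<subseteq> BOm Om al"
    using assms countable_subset[OF _ countable_Bcl] unfolding is_omega1_def BOm_def by blast
  hence "\<exists>rho. rho < Om \<and> rho \<notin> BOm Om al" by blast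
  hence "opsi Om al < Om \<and> opsi Om al \<notin> BOm Om al"
    unfolding opsi_unfold by (rule LeastI_ex)
  thus "opsi Om al < Om" and "opsi Om al \<notin> BOm Om al" by blast+
qed

lemma opsi_mono:
  assumes "is_omega1 Om" and "al \<le> be"
  shows "opsi Om al \<le> opsi Om be"
proof -
  have "opsi Om be \<notin> BOm Om al"
    using opsi_less_notin_BOm(2)[OF assms(1)] BOm_mono[OF assms(2)] by blast
  with opsi_less_notin_BOm(1)[OF assms(1)] show ?thesis
    unfolding opsi_unfold[of Om al] by (blast intro: Least_le)
qed

lemma opsi_strict_mono:
  assumes "is_omega1 Om" and "al < be" and "al \<in> BOm Om be"
  shows "opsi Om al < opsi Om be"
proof -
  have "opsi Om al \<in> BOm Om be"
    using assms(3,2) unfolding BOm_def by (rule Bcl.psi)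
  hence "opsi Om al \<noteq> opsi Om be" using opsi_less_notin_BOm(2)[OF assms(1)] by metis
  thus ?thesis using opsi_mono[OF assms(1)] assms(2) by (simp add: order.strict_iff_order)
qed

lemma mem_HH_empty_iff: "x \<in> HH Om e {} \<longleftrightarrow> (\<forall>g. e < g \<longrightarrow> x \<in> BOm Om g)"
  unfolding HH_def by auto

lemma HH_mono: "e \<le> e' \<Longrightarrow> HH Om e {} \<subseteq> HH Om e' {}"
  by (auto simp: mem_HH_empty_iff)

lemma ozero_in_HH: "ozero \<in> HH Om e {}"
  unfolding mem_HH_empty_iff BOm_def by (blast intro: Bcl.zero)

lemma Om_in_HH: "Om \<in> HH Om e {}"
  unfolding mem_HH_empty_iff BOm_def by (blast intro: Bcl.Om)

lemma oplus_in_HH: "x \<in> HH Om e {} \<Longrightarrow> y \<in> HH Om e {} \<Longrightarrow> oplus x y \<in> HH Om e {}"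
  unfolding mem_HH_empty_iff BOm_def by (blast intro: Bcl.plus)

lemma ophi_in_HH: "x \<in> HH Om e {} \<Longrightarrow> y \<in> HH Om e {} \<Longrightarrow> ophi x y \<in> HH Om e {}"
  unfolding mem_HH_empty_iff BOm_def by (blast intro: Bcl.phi)

lemma oexp_oomega_in_HH: "x \<in> HH Om e {} \<Longrightarrow> oexp oomega x \<in> HH Om e {}"
  using ophi_in_HH[OF ozero_in_HH] by (simp add: ophi_ozero)

lemma opsi_in_HH: "x \<in> HH Om e {} \<Longrightarrow> x \<le> e \<Longrightarrow> opsi Om x \<in> HH Om e {}"
  unfolding mem_HH_empty_iff BOm_def by (blast intro: Bcl.psi le_less_trans)

theorem lemma2p20:
  fixes Om eta :: "'a::wellorder"
  assumes "is_omega1 Om" and "omega2_universe Om"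
    and "eta \<in> BOm Om (eps_succ Om)"
    and "eta \<in> HH Om eta {}"
  defines "hat \<equiv> (\<lambda>beta. oplus eta (oexp oomega (oplus Om beta)))"
  shows "(\<forall>alpha. alpha \<in> BOm Om (eps_succ Om) \<and> alpha \<in> HH Om eta {} \<longrightarrow>
            hat alpha \<in> HH Om (hat alpha) {} \<and> opsi Om (hat alpha) \<in> HH Om (hat alpha) {})
       \<and> (\<forall>alpha0 alpha. alpha0 \<in> BOm Om (eps_succ Om) \<and> alpha \<in> BOm Om (eps_succ Om)
            \<and> alpha0 \<in> HH Om eta {} \<and> alpha0 < alpha \<longrightarrow>
            opsi Om (hat alpha0) < opsi Om (hat alpha))"
proof -
  have hat_in_HH: "hat alpha \<in> HH Om (hat alpha) {}" if "alpha \<in> HH Om eta {}" for alpha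
  proof -
    have "HH Om eta {} \<subseteq> HH Om (hat alpha) {}"
      unfolding hat_def by (rule HH_mono, rule oplus_ge_left[OF assms(1,2)])
    thus ?thesis using assms(4) that unfolding hat_def
      by (blast intro: oplus_in_HH oexp_oomega_in_HH Om_in_HH)
  qed
  have hat_strict_mono: "hat alpha0 < hat alpha" if "alpha0 < alpha" for alpha0 alpha
    unfolding hat_def using oone_less_oomega[OF assms(1,2)] that
    by (intro oplus_strict_mono[OF assms(1,2)] oexp_strict_mono[OF assms(1,2)])
  have "opsi Om (hat alpha0) < opsi Om (hat alpha)"
    if "alpha0 \<in> HH Om eta {}" and "alpha0 < alpha" for alpha0 alpha
    using hat_in_HH[OF that(1)] hat_strict_mono[OF that(2)] unfolding mem_HH_empty_iff
    by (blast intro: opsi_strict_mono[OF assms(1)])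
  with hat_in_HH show ?thesis by (blast intro: opsi_in_HH)
qed

end
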